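(* Let $f$ be an equivariant function between sets of strings over polynomial orbit-finite alphabets. If for some tuple of atoms $\bar a$ the function $f$ is a composition of $\bar a$-primes, then $f$ is a composition of primes.
   Context: Atoms $\mathbb A$ are a countably infinite set; atom automorphisms are bijections of $\mathbb A$; polynomial orbit-finite sets are built from $\mathbb A$ and singletons by finite products and disjoint unions. A function is $\bar a$-supported if $\pi\circ f\circ\pi^{-1}=f$ for every automorphism $\pi$ fixing $\bar a$ pointwise; equivariant means supported by the empty tuple. Compositions of $\bar a$-primes: the smallest class of functions containing (i) length-preserving homomorphisms obtained by lifting letterwise an $\bar a$-supported function $\Sigma\to\Gamma$ between polynomial orbit-finite sets, (ii) functions computed by classical Mealy machines (finite alphabets, finite states, deterministic transition $Q\times\Sigma\to Q\times\Gamma$ outputting one letter per input letter), (iii) atom propagation $(\mathbb A+\{\epsilon,\downarrow\})^*\to(\mathbb A+\bot)^*$ (position $i$ outputs the atom of position $j$ if $i$ is labelled $\downarrow$, $j<i$ carries an atom and all positions strictly between are labelled $\epsilon$; otherwise $\bot$), closed under sequential composition and parallel composition $f_1|f_2:(\Sigma_1\times\Sigma_2)^*\to(\Gamma_1\times\Gamma_2)^*$ (apply $f_i$ to the $i$-th projection). Compositions of primes are compositions of $\bar a$-primes for $\bar a$ the empty tuple (i.e. with equivariant homomorphisms). *)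

theory Defs
  imports Main
begin

text \<open>Atoms are modelled by the countably infinite type nat; atom automorphisms are
  bijections nat to nat.  All alphabet elements live in a universal value type.\<close>

datatype val = VA nat | VU | VP val val | VL val | VR val

datatype pof = PAtom | PUnit | PEmpty | PProd pof pof | PSum pof pof

fun elems :: "pof \<Rightarrow> val set" where
  "elems PAtom = range VA"
| "elems PUnit = {VU}"
| "elems PEmpty = {}"
| "elems (PProd A B) = {VP x y | x y. x \<in> elems A \<and> y \<in> elems B}"
| "elems (PSum A B) = VL ` elems A \<union> VR ` elems B"

fun act :: "(nat \<Rightarrow> nat) \<Rightarrow> val \<Rightarrow> val" where
  "act \<pi> (VA a) = VA (\<pi> a)"
| "act \<pi> VU = VU"
| "act \<pi> (VP x y) = VP (act \<pi> x) (act \<pi> y)"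
| "act \<pi> (VL x) = VL (act \<pi> x)"
| "act \<pi> (VR x) = VR (act \<pi> x)"

definition supported_on :: "nat list \<Rightarrow> val set \<Rightarrow> (val \<Rightarrow> val) \<Rightarrow> bool" where
  "supported_on abar X h \<longleftrightarrow>
     (\<forall>\<pi>. bij \<pi> \<and> (\<forall>a\<in>set abar. \<pi> a = a) \<longrightarrow> (\<forall>x\<in>X. h (act \<pi> x) = act \<pi> (h x)))"

definition supported_str :: "nat list \<Rightarrow> val set \<Rightarrow> (val list \<Rightarrow> val list) \<Rightarrow> bool" where
  "supported_str abar X f \<longleftrightarrow>
     (\<forall>\<pi>. bij \<pi> \<and> (\<forall>a\<in>set abar. \<pi> a = a) \<longrightarrow>
        (\<forall>w\<in>lists X. f (map (act \<pi>) w) = map (act \<pi>) (f w)))"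

definition equivariant_str :: "val set \<Rightarrow> (val list \<Rightarrow> val list) \<Rightarrow> bool" where
  "equivariant_str X f \<longleftrightarrow> supported_str [] X f"

fun mealy_run :: "(nat \<Rightarrow> val \<Rightarrow> nat \<times> val) \<Rightarrow> nat \<Rightarrow> val list \<Rightarrow> val list" where
  "mealy_run \<delta> q [] = []"
| "mealy_run \<delta> q (x # w) = snd (\<delta> q x) # mealy_run \<delta> (fst (\<delta> q x)) w"

text \<open>Atom propagation: input alphabet A + {eps, down}, output alphabet A + {bot}.\<close>
definition PropIn :: pof where "PropIn = PSum PAtom (PSum PUnit PUnit)"
definition PropOut :: pof where "PropOut = PSum PAtom PUnit"
definition eps_l :: val where "eps_l = VR (VL VU)"
definition down_l :: val where "down_l = VR (VR VU)"
definition bot_l :: val where "bot_l = VR VU"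

definition is_atom_l :: "val \<Rightarrow> bool" where
  "is_atom_l x \<longleftrightarrow> (\<exists>a. x = VL (VA a))"

definition prop_src :: "val list \<Rightarrow> nat \<Rightarrow> nat \<Rightarrow> bool" where
  "prop_src w i j \<longleftrightarrow> j < i \<and> is_atom_l (w ! j) \<and> (\<forall>k. j < k \<and> k < i \<longrightarrow> w ! k = eps_l)"

definition atom_prop :: "val list \<Rightarrow> val list" where
  "atom_prop w = map (\<lambda>i. if w ! i = down_l \<and> (\<exists>j. prop_src w i j)
                            then w ! (THE j. prop_src w i j) else bot_l) [0..<length w]"

fun pfst :: "val \<Rightarrow> val" where "pfst (VP x y) = x" | "pfst _ = VU"
fun psnd :: "val \<Rightarrow> val" where "psnd (VP x y) = y" | "psnd _ = VU"

text \<open>Compositions of abar-primes, as functions S* \<rightarrow> G* (considered extensionally on S*).\<close>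
inductive comp_primes :: "nat list \<Rightarrow> pof \<Rightarrow> pof \<Rightarrow> (val list \<Rightarrow> val list) \<Rightarrow> bool"
  for abar :: "nat list" where
  homomorphism: "\<lbrakk>\<forall>x\<in>elems S. h x \<in> elems G; supported_on abar (elems S) h;
         \<forall>w\<in>lists (elems S). f w = map h w\<rbrakk> \<Longrightarrow> comp_primes abar S G f"
| mealy_machine: "\<lbrakk>finite (elems S); finite (elems G); finite Q; q0 \<in> Q;
          \<forall>q\<in>Q. \<forall>x\<in>elems S. fst (\<delta> q x) \<in> Q \<and> snd (\<delta> q x) \<in> elems G;
          \<forall>w\<in>lists (elems S). f w = mealy_run \<delta> q0 w\<rbrakk> \<Longrightarrow> comp_primes abar S G f"
| propagation: "\<forall>w\<in>lists (elems PropIn). f w = atom_prop w \<Longrightarrow> comp_primes abar PropIn PropOut f"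
| sequential: "\<lbrakk>comp_primes abar S G f; comp_primes abar G D g;
         \<forall>w\<in>lists (elems S). h w = g (f w)\<rbrakk> \<Longrightarrow> comp_primes abar S D h"
| parallel: "\<lbrakk>comp_primes abar S1 G1 f1; comp_primes abar S2 G2 f2;
         \<forall>w\<in>lists (elems (PProd S1 S2)).
            h w = map2 VP (f1 (map pfst w)) (f2 (map psnd w))\<rbrakk>
        \<Longrightarrow> comp_primes abar (PProd S1 S2) (PProd G1 G2) h"

end

theory Submission
  imports Defs "HOL-Combinatorics.Transposition"
begin

text \<open>The atoms of \<open>abar\<close> are replaced by fresh constants: every atom position of an alphabet
  may also carry one of \<open>length abar\<close> constants, and the \<open>k\<close>-th atom of \<open>abar\<close> is encoded as the
  \<open>k\<close>-th constant. Each \<open>abar\<close>-prime is simulated on encoded strings by an equivariant composition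
  of primes: a supported homomorphism is conjugated by an automorphism moving the atoms of its
  argument off \<open>abar\<close>, Mealy machines are unaffected, and atom propagation runs on two tracks, the
  atoms being propagated by atom propagation and the constants by a Mealy machine.
  If \<open>f\<close> is equivariant, moving the atoms of the input off \<open>abar\<close> shows that the simulation maps
  constant-free encodings to constant-free encodings, so it restricts to \<open>f\<close>; decoding its
  output is equivariant once a copy of the input is kept to supply a default letter.\<close>

fun atoms :: "val \<Rightarrow> nat set" where
  "atoms (VA a) = {a}"
| "atoms VU = {}"
| "atoms (VP x y) = atoms x \<union> atoms y"
| "atoms (VL x) = atoms x"
| "atoms (VR x) = atoms x"

lemma finite_atoms [simp]: "finite (atoms x)"
  by (induction x) auto

lemma atoms_act [simp]: "atoms (act \<pi> x) = \<pi> ` atoms x"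
  by (induction x) (auto simp: image_Un)

lemma act_cong: "(\<And>a. a \<in> atoms x \<Longrightarrow> \<pi> a = \<pi>' a) \<Longrightarrow> act \<pi> x = act \<pi>' x"
  by (induction x) auto

lemma act_act: "act \<pi> (act \<pi>' x) = act (\<pi> \<circ> \<pi>') x"
  by (induction x) auto

lemma act_id [simp]: "act id x = x"
  by (induction x) auto

lemma act_no_atoms: "atoms x = {} \<Longrightarrow> act \<pi> x = x"
  using act_cong[of x \<pi> id] by auto

lemma act_eq_no_atoms: "atoms y = {} \<Longrightarrow> act \<pi> x = y \<longleftrightarrow> x = y"
  by (induction x arbitrary: y; case_tac y) auto

lemma act_elems: "x \<in> elems A \<Longrightarrow> act \<pi> x \<in> elems A"
  by (induction A arbitrary: x) auto

lemma lists_act: "w \<in> lists (elems A) \<Longrightarrow> map (act \<pi>) w \<in> lists (elems A)"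
  using act_elems by auto

lemma act_inv_act: "bij \<pi> \<Longrightarrow> act (inv \<pi>) (act \<pi> x) = x"
  by (simp add: act_act bij_is_inj)

lemma inj_act: "bij \<pi> \<Longrightarrow> inj (act \<pi>)"
  by (metis act_inv_act injI)

lemma act_transpose_fresh:
  "b \<notin> atoms x \<Longrightarrow> c \<notin> atoms x \<Longrightarrow> act (Transposition.transpose b c) x = x"
  by (metis act_cong act_id id_apply transpose_apply_other)

lemma atoms_subset_if_transpositions_fix:
  assumes "finite B" and fixed: "\<And>b c. b \<notin> B \<Longrightarrow> c \<notin> B \<Longrightarrow> act (Transposition.transpose b c) y = y"
  shows "atoms y \<subseteq> B"
proof
  fix b assume b: "b \<in> atoms y"
  show "b \<in> B"
  proof (rule ccontr)
    assume "b \<notin> B"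
    obtain c where c: "c \<notin> B \<union> atoms y"
      using ex_new_if_finite[OF infinite_UNIV_nat] assms(1) by (metis finite_Un finite_atoms)
    have "c \<in> atoms (act (Transposition.transpose b c) y)"
      using b by (simp add: image_iff) (metis transpose_apply_first)
    with fixed[OF \<open>b \<notin> B\<close>, of c] c show False by auto
  qed
qed

text \<open>Otherwise the orbit of the letter under transpositions would contain infinitely many atoms.\<close>

lemma atoms_finite_elems:
  assumes "finite (elems A)" and x: "x \<in> elems A"
  shows "atoms x = {}"
proof (rule ccontr)
  assume "atoms x \<noteq> {}"
  then obtain a where a: "a \<in> atoms x" by blast
  have "b \<in> (\<Union>y\<in>elems A. atoms y)" for b
  proof -
    have "b \<in> atoms (act (Transposition.transpose a b) x)"
      using a by (simp add: image_iff) (metis transpose_apply_first)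
    with act_elems[OF x] show ?thesis by blast
  qed
  moreover have "finite (\<Union>y\<in>elems A. atoms y)" using assms(1) by simp
  ultimately show False using infinite_UNIV_nat by (metis finite_subset subsetI)
qed

lemma map_act_finite_elems:
  "finite (elems A) \<Longrightarrow> v \<in> lists (elems A) \<Longrightarrow> map (act \<pi>) v = v"
  by (induction v) (auto simp: act_no_atoms atoms_finite_elems)

lemma supported_on_atoms:
  assumes sup: "supported_on as X h" and x: "x \<in> X"
  shows "atoms (h x) \<subseteq> atoms x \<union> set as"
proof (rule atoms_subset_if_transpositions_fix)
  fix b c assume b: "b \<notin> atoms x \<union> set as" and c: "c \<notin> atoms x \<union> set as"
  let ?\<tau> = "Transposition.transpose b c"
  have "act ?\<tau> x = x" using b c by (simp add: act_transpose_fresh)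
  moreover have "\<forall>a\<in>set as. ?\<tau> a = a" using b c by (auto simp: transpose_def)
  ultimately show "act ?\<tau> (h x) = h x"
    using sup x unfolding supported_on_def by (metis bij_transpose)
qed simp

lemma supported_str_atoms:
  assumes sup: "supported_str as X f" and w: "w \<in> lists X" and y: "y \<in> set (f w)"
  shows "atoms y \<subseteq> (\<Union>x\<in>set w. atoms x) \<union> set as"
proof (rule atoms_subset_if_transpositions_fix)
  fix b c assume b: "b \<notin> (\<Union>x\<in>set w. atoms x) \<union> set as" and c: "c \<notin> (\<Union>x\<in>set w. atoms x) \<union> set as"
  let ?\<tau> = "Transposition.transpose b c"
  have "map (act ?\<tau>) w = w" using b c by (auto intro: map_idI act_transpose_fresh)
  moreover have "\<forall>a\<in>set as. ?\<tau> a = a" using b c by (auto simp: transpose_def)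
  ultimately have "map (act ?\<tau>) (f w) = f w"
    using sup w unfolding supported_str_def by (metis bij_transpose)
  then show "act ?\<tau> y = y" using y by (metis list.map_ident map_eq_conv)
qed simp

lemma bij_extend:
  assumes "finite A" "inj_on g A" "g ` A \<inter> C = {}" "A \<inter> C = {}"
  shows "\<exists>\<rho>. bij \<rho> \<and> (\<forall>x\<in>A. \<rho> x = g x) \<and> (\<forall>c\<in>C. \<rho> c = c)"
  using assms
proof (induction A rule: finite_induct)
  case empty
  show ?case by (intro exI[of _ id]) (auto simp: bij_def)
next
  case (insert a A)
  then obtain \<rho> where \<rho>: "bij \<rho>" "\<forall>x\<in>A. \<rho> x = g x" "\<forall>c\<in>C. \<rho> c = c" by auto
  define \<rho>' where "\<rho>' = Transposition.transpose (\<rho> a) (g a) \<circ> \<rho>"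
  have "bij \<rho>'" unfolding \<rho>'_def using \<rho>(1) by (rule bij_comp) simp
  moreover have "\<rho>' a = g a" by (simp add: \<rho>'_def)
  moreover have "\<rho>' x = g x" if x: "x \<in> A" for x
  proof -
    have "g x \<noteq> g a" using insert.prems(1) insert.hyps(2) x by (metis inj_on_contraD insertI1 insertI2)
    moreover have "\<rho> x \<noteq> \<rho> a" using \<rho>(1) x insert.hyps(2) by (metis bij_is_inj inj_eq)
    ultimately show ?thesis using \<rho>(2) x by (simp add: \<rho>'_def transpose_def)
  qed
  moreover have "\<rho>' c = c" if c: "c \<in> C" for c
  proof -
    have "c \<noteq> g a" using insert.prems(2) c by auto
    moreover have "\<rho> a \<noteq> c" using \<rho> c insert.prems(3) by (metis IntI bij_is_inj empty_iff inj_eq insertI1)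
    ultimately show ?thesis using \<rho>(3) c by (auto simp: \<rho>'_def transpose_def)
  qed
  ultimately show ?case by (intro exI[of _ \<rho>']) auto
qed

lemma bij_avoiding:
  fixes R C :: "nat set"
  assumes "finite R" "finite C"
  obtains \<sigma> where "bij \<sigma>" "\<sigma> ` R \<inter> C = {}"
proof -
  define M where "M = Suc (Max (R \<union> C))"
  have C: "c < M" if "c \<in> C" for c
    using assms that by (simp add: M_def le_imp_less_Suc)
  obtain \<sigma> where \<sigma>: "bij \<sigma>" "\<forall>x\<in>R. \<sigma> x = x + M"
    using bij_extend[OF assms(1), of "\<lambda>x. x + M" "{}"] by (auto simp: inj_on_def)
  have "\<sigma> ` R \<inter> C = {}"
    using \<sigma>(2) by (auto dest: C)
  with \<sigma>(1) show thesis by (rule that)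
qed

lemma bij_transfer:
  assumes "finite X" "bij \<sigma>\<^sub>1" "bij \<sigma>\<^sub>2" "\<sigma>\<^sub>1 ` X \<inter> C = {}" "\<sigma>\<^sub>2 ` X \<inter> C = {}"
  obtains \<rho> where "bij \<rho>" "\<forall>x\<in>X. \<rho> (\<sigma>\<^sub>1 x) = \<sigma>\<^sub>2 x" "\<forall>c\<in>C. \<rho> c = c"
proof -
  let ?g = "\<sigma>\<^sub>2 \<circ> inv \<sigma>\<^sub>1"
  have g: "?g (\<sigma>\<^sub>1 x) = \<sigma>\<^sub>2 x" for x
    using assms(2) by (simp add: bij_is_inj)
  have "bij ?g"
    using assms(2,3) by (simp add: bij_comp bij_imp_bij_inv)
  then have inj: "inj_on ?g (\<sigma>\<^sub>1 ` X)"
    by (metis bij_is_inj inj_on_subset subset_UNIV)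
  have disj: "?g ` \<sigma>\<^sub>1 ` X \<inter> C = {}"
    using assms(5) by (simp only: image_image g)
  obtain \<rho> where \<rho>: "bij \<rho>" "\<forall>y\<in>\<sigma>\<^sub>1 ` X. \<rho> y = ?g y" "\<forall>c\<in>C. \<rho> c = c"
    using bij_extend[OF finite_imageI[OF assms(1)] inj disj assms(4)] by (elim exE conjE)
  have "\<forall>x\<in>X. \<rho> (\<sigma>\<^sub>1 x) = \<sigma>\<^sub>2 x" using \<rho>(2) assms(2) by (simp add: bij_is_inj)
  with \<rho>(1,3) show thesis using that by blast
qed

section \<open>Atom propagation\<close>

fun last_non_eps :: "val list \<Rightarrow> nat \<Rightarrow> nat option" where
  "last_non_eps w 0 = None"
| "last_non_eps w (Suc i) = (if w ! i = eps_l then last_non_eps w i else Some i)"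

lemma last_non_eps_Some:
  "last_non_eps w i = Some j \<Longrightarrow> j < i \<and> w ! j \<noteq> eps_l \<and> (\<forall>k. j < k \<and> k < i \<longrightarrow> w ! k = eps_l)"
  by (induction i) (auto split: if_splits simp: less_Suc_eq)

lemma last_non_eps_None: "last_non_eps w i = None \<Longrightarrow> k < i \<Longrightarrow> w ! k = eps_l"
  by (induction i) (auto split: if_splits simp: less_Suc_eq)

lemma last_non_eps_map:
  assumes "i \<le> length w" and "\<And>k. k < i \<Longrightarrow> g (w ! k) = eps_l \<longleftrightarrow> w ! k = eps_l"
  shows "last_non_eps (map g w) i = last_non_eps w i"
  using assms by (induction i) auto

lemma is_atom_l_not_eps: "is_atom_l x \<Longrightarrow> x \<noteq> eps_l"
  by (auto simp: is_atom_l_def eps_l_def)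

lemma prop_src_iff: "prop_src w i j \<longleftrightarrow> last_non_eps w i = Some j \<and> is_atom_l (w ! j)"
proof
  assume src: "prop_src w i j"
  have "last_non_eps w i = Some j"
  proof (cases "last_non_eps w i")
    case None
    with src show ?thesis
      using last_non_eps_None is_atom_l_not_eps by (auto simp: prop_src_def)
  next
    case (Some j')
    with src have "\<not> j < j'" "\<not> j' < j"
      using last_non_eps_Some[OF Some] is_atom_l_not_eps by (auto simp: prop_src_def)
    with Some show ?thesis by simp
  qed
  with src show "last_non_eps w i = Some j \<and> is_atom_l (w ! j)" by (simp add: prop_src_def)
next
  assume "last_non_eps w i = Some j \<and> is_atom_l (w ! j)"
  then show "prop_src w i j" using last_non_eps_Some[of w i j] by (auto simp: prop_src_def)
qed

lemma length_atom_prop [simp]: "length (atom_prop w) = length w"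
  by (simp add: atom_prop_def)

lemma atom_prop_nth:
  assumes "i < length w"
  shows "atom_prop w ! i =
    (if w ! i = down_l \<and> (\<exists>j. last_non_eps w i = Some j \<and> is_atom_l (w ! j))
     then w ! the (last_non_eps w i) else bot_l)"
proof -
  have "(\<exists>j. prop_src w i j) \<longleftrightarrow> (\<exists>j. last_non_eps w i = Some j \<and> is_atom_l (w ! j))"
    by (simp add: prop_src_iff)
  moreover have "(THE j. prop_src w i j) = the (last_non_eps w i)"
    if "\<exists>j. last_non_eps w i = Some j \<and> is_atom_l (w ! j)"
    using that by (auto simp: prop_src_iff)
  ultimately show ?thesis
    using assms by (auto simp: atom_prop_def)
qed

lemma act_eps_l [simp]: "act \<pi> eps_l = eps_l"
  and act_down_l [simp]: "act \<pi> down_l = down_l"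
  and act_bot_l [simp]: "act \<pi> bot_l = bot_l"
  by (simp_all add: eps_l_def down_l_def bot_l_def)

lemma act_eq_eps_l [simp]: "act \<pi> x = eps_l \<longleftrightarrow> x = eps_l"
  and act_eq_down_l [simp]: "act \<pi> x = down_l \<longleftrightarrow> x = down_l"
  by (simp_all add: act_eq_no_atoms eps_l_def down_l_def)

lemma is_atom_l_act [simp]: "is_atom_l (act \<pi> x) \<longleftrightarrow> is_atom_l x"
  by (cases x) (auto simp: is_atom_l_def act_eq_no_atoms elim: act.elims)

lemma atom_prop_act: "atom_prop (map (act \<pi>) w) = map (act \<pi>) (atom_prop w)"
proof (rule nth_equalityI)
  fix i assume "i < length (atom_prop (map (act \<pi>) w))"
  then have i: "i < length w" by simp
  have "last_non_eps (map (act \<pi>) w) i = last_non_eps w i"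
    using i by (intro last_non_eps_map) auto
  then show "atom_prop (map (act \<pi>) w) ! i = map (act \<pi>) (atom_prop w) ! i"
    using i last_non_eps_Some[of w i] by (auto simp: atom_prop_nth)
qed simp

lemma atom_prop_lists: "atom_prop w \<in> lists (elems PropOut)"
proof -
  have "atom_prop w ! i \<in> elems PropOut" if "i < length w" for i
    using that last_non_eps_Some[of w i]
    by (auto simp: atom_prop_nth PropOut_def bot_l_def is_atom_l_def)
  then show ?thesis by (auto simp: in_set_conv_nth)
qed

lemma length_mealy_run [simp]: "length (mealy_run \<delta> q w) = length w"
  by (induction w arbitrary: q) auto

lemma mealy_run_lists:
  assumes "\<forall>q\<in>Q. \<forall>x\<in>S. fst (\<delta> q x) \<in> Q \<and> snd (\<delta> q x) \<in> G"
  shows "q \<in> Q \<Longrightarrow> w \<in> lists S \<Longrightarrow> mealy_run \<delta> q w \<in> lists G"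
  using assms by (induction w arbitrary: q) auto

lemma mealy_run_nth:
  "i < length w \<Longrightarrow> mealy_run \<delta> q w ! i = snd (\<delta> (foldl (\<lambda>q x. fst (\<delta> q x)) q (take i w)) (w ! i))"
  by (induction w arbitrary: q i) (auto simp: nth_Cons split: nat.split)

lemma map2_VP_lists:
  "u \<in> lists (elems A) \<Longrightarrow> v \<in> lists (elems B) \<Longrightarrow> map2 VP u v \<in> lists (elems (PProd A B))"
  by (auto elim!: in_set_zipE)

lemma comp_primes_lists:
  "comp_primes as S G f \<Longrightarrow> w \<in> lists (elems S) \<Longrightarrow> f w \<in> lists (elems G) \<and> length (f w) = length w"
proof (induction arbitrary: w rule: comp_primes.induct)
  case (mealy_machine S G Q q0 \<delta> f)
  then show ?case using mealy_run_lists[of Q "elems S" \<delta> "elems G" q0 w] by auto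
next
  case (propagation f)
  then show ?case using atom_prop_lists by simp
next
  case (parallel S1 G1 f1 S2 G2 f2 h)
  have "map pfst w \<in> lists (elems S1)" "map psnd w \<in> lists (elems S2)"
    using parallel.prems by force+
  then show ?case using parallel.IH parallel.hyps(3) parallel.prems map2_VP_lists by simp
qed auto

lemma map2_VP_act: "map2 VP (map (act \<pi>) u) (map (act \<pi>) v) = map (act \<pi>) (map2 VP u v)"
  by (simp add: zip_map1 zip_map2 split_def)

lemma comp_primes_act:
  assumes "comp_primes as S G f" "bij \<pi>" "\<forall>a\<in>set as. \<pi> a = a" "w \<in> lists (elems S)"
  shows "f (map (act \<pi>) w) = map (act \<pi>) (f w)"
  using assms
proof (induction arbitrary: w rule: comp_primes.induct)
  case (homomorphism S h G f)
  then show ?case using lists_act[of w S \<pi>] unfolding supported_on_def by auto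
next
  case (mealy_machine S G Q q0 \<delta> f)
  have "f w \<in> lists (elems G)"
    using mealy_machine mealy_run_lists[of Q "elems S" \<delta> "elems G" q0 w] by auto
  then show ?case
    using mealy_machine.prems(3) mealy_machine.hyps(1,2) by (simp add: map_act_finite_elems)
next
  case (propagation f)
  then show ?case using atom_prop_act lists_act by metis
next
  case (sequential S G f D g h)
  have "f w \<in> lists (elems G)" using comp_primes_lists sequential.hyps(1) sequential.prems(3) by blast
  then show ?case using sequential lists_act by simp
next
  case (parallel S1 G1 f1 S2 G2 f2 h)
  have w: "map pfst w \<in> lists (elems S1)" "map psnd w \<in> lists (elems S2)"
    using parallel.prems by force+
  have m: "map pfst (map (act \<pi>) w) = map (act \<pi>) (map pfst w)"
          "map psnd (map (act \<pi>) w) = map (act \<pi>) (map psnd w)"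
    using parallel.prems by force+
  have "h (map (act \<pi>) w) = map2 VP (f1 (map pfst (map (act \<pi>) w))) (f2 (map psnd (map (act \<pi>) w)))"
    using parallel.hyps(3) lists_act[OF parallel.prems(3)] by blast
  also have "\<dots> = map2 VP (map (act \<pi>) (f1 (map pfst w))) (map (act \<pi>) (f2 (map psnd w)))"
    by (simp only: m parallel.IH(1)[OF parallel.prems(1,2) w(1)] parallel.IH(2)[OF parallel.prems(1,2) w(2)])
  also have "\<dots> = map (act \<pi>) (h w)"
    using parallel.hyps(3) parallel.prems(3) by (simp only: map2_VP_act)
  finally show ?case .
qed

section \<open>Encoding the atoms of a tuple by constants\<close>

fun Consts :: "nat \<Rightarrow> pof" where
  "Consts 0 = PEmpty"
| "Consts (Suc n) = PSum PUnit (Consts n)"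

fun cst :: "nat \<Rightarrow> val" where
  "cst 0 = VL VU"
| "cst (Suc k) = VR (cst k)"

fun cst_index :: "val \<Rightarrow> nat" where
  "cst_index (VR v) = Suc (cst_index v)"
| "cst_index _ = 0"

lemma elems_Consts: "elems (Consts n) = cst ` {..<n}"
proof (induction n)
  case (Suc n)
  have "cst ` {..<Suc n} = insert (cst 0) (VR ` cst ` {..<n})"
    by (auto simp: lessThan_Suc_eq_insert_0 image_image)
  with Suc show ?case by auto
qed simp

lemma cst_index_cst [simp]: "cst_index (cst k) = k"
  by (induction k) auto

lemma atoms_cst [simp]: "atoms (cst k) = {}"
  by (induction k) auto

fun enc :: "nat \<Rightarrow> pof \<Rightarrow> pof" where
  "enc n PAtom = PSum PAtom (Consts n)"
| "enc n PUnit = PUnit"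
| "enc n PEmpty = PEmpty"
| "enc n (PProd A B) = PProd (enc n A) (enc n B)"
| "enc n (PSum A B) = PSum (enc n A) (enc n B)"

definition atom_index :: "nat list \<Rightarrow> nat \<Rightarrow> nat" where
  "atom_index as a = (LEAST k. k < length as \<and> as ! k = a)"

lemma atom_index: "a \<in> set as \<Longrightarrow> atom_index as a < length as \<and> as ! atom_index as a = a"
  unfolding atom_index_def by (rule LeastI_ex) (auto simp: in_set_conv_nth)

fun enc_val :: "nat list \<Rightarrow> pof \<Rightarrow> val \<Rightarrow> val" where
  "enc_val as PAtom (VA a) = (if a \<in> set as then VR (cst (atom_index as a)) else VL (VA a))"
| "enc_val as (PProd A B) (VP x y) = VP (enc_val as A x) (enc_val as B y)"
| "enc_val as (PSum A B) (VL x) = VL (enc_val as A x)"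
| "enc_val as (PSum A B) (VR x) = VR (enc_val as B x)"
| "enc_val as _ x = x"

fun dec_val :: "nat list \<Rightarrow> pof \<Rightarrow> val \<Rightarrow> val" where
  "dec_val as PAtom (VL x) = x"
| "dec_val as PAtom (VR c) = VA (as ! cst_index c)"
| "dec_val as (PProd A B) (VP x y) = VP (dec_val as A x) (dec_val as B y)"
| "dec_val as (PSum A B) (VL x) = VL (dec_val as A x)"
| "dec_val as (PSum A B) (VR x) = VR (dec_val as B x)"
| "dec_val as _ x = x"

fun emb_val :: "pof \<Rightarrow> val \<Rightarrow> val" where
  "emb_val PAtom x = VL x"
| "emb_val (PProd A B) (VP x y) = VP (emb_val A x) (emb_val B y)"
| "emb_val (PSum A B) (VL x) = VL (emb_val A x)"
| "emb_val (PSum A B) (VR x) = VR (emb_val B x)"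
| "emb_val _ x = x"

lemma enc_val_elems: "x \<in> elems A \<Longrightarrow> enc_val as A x \<in> elems (enc (length as) A)"
  by (induction A arbitrary: x) (auto simp: elems_Consts atom_index)

lemma dec_enc_val: "x \<in> elems A \<Longrightarrow> dec_val as A (enc_val as A x) = x"
  by (induction A arbitrary: x) (auto simp: atom_index)

lemma dec_val_elems: "x \<in> elems (enc (length as) A) \<Longrightarrow> dec_val as A x \<in> elems A"
  by (induction A arbitrary: x) (auto simp: elems_Consts)

lemma atoms_enc_val: "x \<in> elems A \<Longrightarrow> atoms (enc_val as A x) = atoms x - set as"
  by (induction A arbitrary: x) (auto split: if_splits)

lemma atoms_dec_val: "x \<in> elems (enc (length as) A) \<Longrightarrow> atoms (dec_val as A x) \<subseteq> atoms x \<union> set as"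
  by (induction A arbitrary: x) (fastforce simp: elems_Consts)+

lemma emb_val_elems: "x \<in> elems A \<Longrightarrow> emb_val A x \<in> elems (enc n A)"
  by (induction A arbitrary: x) auto

lemma dec_emb_val: "x \<in> elems A \<Longrightarrow> dec_val as A (emb_val A x) = x"
  by (induction A arbitrary: x) auto

lemma emb_val_act: "x \<in> elems A \<Longrightarrow> emb_val A (act \<pi> x) = act \<pi> (emb_val A x)"
  by (induction A arbitrary: x) auto

lemma enc_val_fresh: "x \<in> elems A \<Longrightarrow> atoms x \<inter> set as = {} \<Longrightarrow> enc_val as A x = emb_val A x"
  by (induction A arbitrary: x) (auto simp: Int_Un_distrib2)

lemma enc_val_no_atoms: "x \<in> elems A \<Longrightarrow> atoms x = {} \<Longrightarrow> enc_val as A x = x"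
  by (induction A arbitrary: x) auto

lemma dec_val_act:
  "x \<in> elems (enc (length as) A) \<Longrightarrow> \<forall>a\<in>set as. \<pi> a = a \<Longrightarrow> dec_val as A (act \<pi> x) = act \<pi> (dec_val as A x)"
  by (induction A arbitrary: x) (auto simp: elems_Consts act_no_atoms)

lemma enc_val_act:
  assumes "x \<in> elems A" "bij \<pi>" "\<forall>a\<in>set as. \<pi> a = a"
  shows "enc_val as A (act \<pi> x) = act \<pi> (enc_val as A x)"
  using assms
proof (induction A arbitrary: x)
  case PAtom
  then obtain a where x: "x = VA a" by auto
  have "\<pi> a \<in> set as \<longleftrightarrow> a \<in> set as"
    using PAtom.prems by (metis bij_is_inj inj_eq)
  with x PAtom.prems show ?case by (auto simp: act_no_atoms)
qed auto

lemma elems_enc_empty: "elems (enc n A) = {} \<longleftrightarrow> elems A = {}"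
  by (induction A) auto

lemma finite_elems_PProd:
  assumes "finite (elems (PProd A B))" "elems A \<noteq> {}" "elems B \<noteq> {}"
  shows "finite (elems A)" "finite (elems B)"
proof -
  have "elems A \<subseteq> pfst ` elems (PProd A B)" "elems B \<subseteq> psnd ` elems (PProd A B)"
    using assms(2,3) by force+
  then show "finite (elems A)" "finite (elems B)"
    using assms(1) finite_surj by blast+
qed

lemma elems_enc_finite: "finite (elems A) \<Longrightarrow> elems (enc n A) = elems A"
proof (induction A)
  case PAtom
  then show ?case using atoms_finite_elems[of PAtom "VA 0"] by auto
next
  case (PProd A B)
  then show ?case
    using elems_enc_empty[of n A] elems_enc_empty[of n B] finite_elems_PProd[of A B]
    by (cases "elems A = {} \<or> elems B = {}") auto
next
  case (PSum A B)
  then show ?case by (simp add: finite_image_iff inj_on_def)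
qed auto

section \<open>Simulating supported homomorphisms\<close>

definition avoids :: "nat list \<Rightarrow> val \<Rightarrow> (nat \<Rightarrow> nat) \<Rightarrow> bool" where
  "avoids as x \<sigma> \<longleftrightarrow> bij \<sigma> \<and> \<sigma> ` atoms x \<inter> set as = {}"

text \<open>Since \<open>h\<close> commutes with the automorphisms fixing \<open>as\<close>,
  the result does not depend on \<open>\<sigma>\<close>, which makes the simulation equivariant.\<close>

definition conj_hom :: "nat list \<Rightarrow> pof \<Rightarrow> pof \<Rightarrow> (val \<Rightarrow> val) \<Rightarrow> (nat \<Rightarrow> nat) \<Rightarrow> val \<Rightarrow> val" where
  "conj_hom as S G h \<sigma> x = act (inv \<sigma>) (enc_val as G (h (dec_val as S (act \<sigma> x))))"

definition enc_hom :: "nat list \<Rightarrow> pof \<Rightarrow> pof \<Rightarrow> (val \<Rightarrow> val) \<Rightarrow> val \<Rightarrow> val" where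
  "enc_hom as S G h x = conj_hom as S G h (SOME \<sigma>. avoids as x \<sigma>) x"

lemma avoids_some: "avoids as x (SOME \<sigma>. avoids as x \<sigma>)"
proof -
  obtain \<sigma> where "bij \<sigma>" "\<sigma> ` atoms x \<inter> set as = {}"
    using bij_avoiding[of "atoms x" "set as"] by auto
  then have "avoids as x \<sigma>" by (simp add: avoids_def)
  then show ?thesis by (rule someI[of "avoids as x"])
qed

lemma conj_hom_indep:
  assumes hG: "\<forall>x\<in>elems S. h x \<in> elems G" and sup: "supported_on as (elems S) h"
    and x: "x \<in> elems (enc (length as) S)" and \<sigma>\<^sub>1: "avoids as x \<sigma>\<^sub>1" and \<sigma>\<^sub>2: "avoids as x \<sigma>\<^sub>2"
  shows "conj_hom as S G h \<sigma>\<^sub>1 x = conj_hom as S G h \<sigma>\<^sub>2 x"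
proof -
  have bij: "bij \<sigma>\<^sub>1" "bij \<sigma>\<^sub>2" using \<sigma>\<^sub>1 \<sigma>\<^sub>2 by (auto simp: avoids_def)
  obtain \<rho> where \<rho>: "bij \<rho>" "\<forall>a\<in>atoms x. \<rho> (\<sigma>\<^sub>1 a) = \<sigma>\<^sub>2 a" "\<forall>c\<in>set as. \<rho> c = c"
    using bij_transfer[of "atoms x" \<sigma>\<^sub>1 \<sigma>\<^sub>2 "set as"] \<sigma>\<^sub>1 \<sigma>\<^sub>2 by (auto simp: avoids_def)
  define y where "y = act \<sigma>\<^sub>1 x"
  define z where "z = dec_val as S y"
  have y: "y \<in> elems (enc (length as) S)" using x act_elems y_def by blast
  have z: "z \<in> elems S" using dec_val_elems y z_def by blast
  have "act \<sigma>\<^sub>2 x = act \<rho> y"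
    unfolding y_def act_act by (rule act_cong) (use \<rho>(2) in auto)
  then have "conj_hom as S G h \<sigma>\<^sub>2 x = act (inv \<sigma>\<^sub>2) (enc_val as G (h (act \<rho> z)))"
    using dec_val_act[OF y \<rho>(3)] by (simp add: conj_hom_def z_def)
  also have "\<dots> = act (inv \<sigma>\<^sub>2 \<circ> \<rho>) (enc_val as G (h z))"
    using sup z \<rho> hG enc_val_act by (simp add: supported_on_def act_act)
  also have "\<dots> = act (inv \<sigma>\<^sub>1) (enc_val as G (h z))"
  proof (rule act_cong)
    fix a assume "a \<in> atoms (enc_val as G (h z))"
    moreover have "atoms (enc_val as G (h z)) \<subseteq> atoms y"
      using atoms_enc_val[of "h z" G] hG z supported_on_atoms[OF sup z] atoms_dec_val[OF y]
      by (auto simp: z_def)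
    ultimately obtain b where "b \<in> atoms x" "a = \<sigma>\<^sub>1 b" by (auto simp: y_def)
    then show "(inv \<sigma>\<^sub>2 \<circ> \<rho>) a = inv \<sigma>\<^sub>1 a"
      using \<rho>(2) bij by (simp add: bij_is_inj)
  qed
  also have "\<dots> = conj_hom as S G h \<sigma>\<^sub>1 x"
    by (simp add: conj_hom_def z_def y_def)
  finally show ?thesis ..
qed

lemma enc_hom_elems:
  "\<forall>x\<in>elems S. h x \<in> elems G \<Longrightarrow> x \<in> elems (enc (length as) S) \<Longrightarrow>
    enc_hom as S G h x \<in> elems (enc (length as) G)"
  by (simp add: enc_hom_def conj_hom_def act_elems dec_val_elems enc_val_elems)

lemma enc_hom_equivariant:
  assumes hG: "\<forall>x\<in>elems S. h x \<in> elems G" and sup: "supported_on as (elems S) h"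
  shows "supported_on [] (elems (enc (length as) S)) (enc_hom as S G h)"
  unfolding supported_on_def
proof (intro allI impI ballI)
  fix \<pi> :: "nat \<Rightarrow> nat" and x assume "bij \<pi> \<and> (\<forall>a\<in>set []. \<pi> a = a)" and x: "x \<in> elems (enc (length as) S)"
  then have \<pi>: "bij \<pi>" by simp
  define \<sigma> where "\<sigma> = (SOME \<sigma>. avoids as x \<sigma>)"
  have \<sigma>: "avoids as x \<sigma>" unfolding \<sigma>_def by (rule avoids_some)
  then have \<sigma>': "avoids as (act \<pi> x) (\<sigma> \<circ> inv \<pi>)"
    using \<pi> by (auto simp: avoids_def image_comp bij_comp bij_imp_bij_inv bij_is_inj)
  have "enc_hom as S G h (act \<pi> x) = conj_hom as S G h (\<sigma> \<circ> inv \<pi>) (act \<pi> x)"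
    unfolding enc_hom_def by (rule conj_hom_indep[OF hG sup act_elems[OF x] avoids_some \<sigma>'])
  also have "\<dots> = act \<pi> (conj_hom as S G h \<sigma> x)"
  proof -
    have "act (\<sigma> \<circ> inv \<pi>) (act \<pi> x) = act \<sigma> x"
      using \<pi> by (simp add: act_act comp_assoc bij_is_inj)
    moreover have "inv (\<sigma> \<circ> inv \<pi>) = \<pi> \<circ> inv \<sigma>"
      using \<pi> \<sigma> by (simp add: avoids_def o_inv_distrib bij_imp_bij_inv inv_inv_eq)
    ultimately show ?thesis by (simp add: conj_hom_def act_act)
  qed
  finally show "enc_hom as S G h (act \<pi> x) = act \<pi> (enc_hom as S G h x)"
    by (simp add: enc_hom_def \<sigma>_def)
qed

lemma enc_hom_enc_val:
  assumes hG: "\<forall>x\<in>elems S. h x \<in> elems G" and sup: "supported_on as (elems S) h"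
    and x: "x \<in> elems S"
  shows "enc_hom as S G h (enc_val as S x) = enc_val as G (h x)"
proof -
  have "avoids as (enc_val as S x) id"
    using atoms_enc_val[OF x] by (auto simp: avoids_def)
  then have "enc_hom as S G h (enc_val as S x) = conj_hom as S G h id (enc_val as S x)"
    unfolding enc_hom_def by (rule conj_hom_indep[OF hG sup enc_val_elems[OF x] avoids_some])
  also have "\<dots> = enc_val as G (h x)"
    using dec_enc_val[OF x] by (simp add: conj_hom_def inv_id)
  finally show ?thesis .
qed

section \<open>Simulating atom propagation\<close>

definition is_VL :: "val \<Rightarrow> bool" where
  "is_VL x \<longleftrightarrow> (\<exists>y. x = VL y)"

text \<open>Atom propagation over \<open>enc n PropIn\<close>, where atoms and constants are both tagged \<open>VL\<close>
  and are propagated alike.\<close>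

definition enc_atom_prop :: "val list \<Rightarrow> val list" where
  "enc_atom_prop w = map (\<lambda>i. if w ! i = down_l \<and> (\<exists>j. last_non_eps w i = Some j \<and> is_VL (w ! j))
      then w ! the (last_non_eps w i) else bot_l) [0..<length w]"

lemma length_enc_atom_prop [simp]: "length (enc_atom_prop w) = length w"
  by (simp add: enc_atom_prop_def)

lemma enc_atom_prop_nth:
  "i < length w \<Longrightarrow> enc_atom_prop w ! i =
    (if w ! i = down_l \<and> (\<exists>j. last_non_eps w i = Some j \<and> is_VL (w ! j))
     then w ! the (last_non_eps w i) else bot_l)"
  by (auto simp: enc_atom_prop_def)

lemma PropIn_cases: "x \<in> elems PropIn \<Longrightarrow> (\<exists>a. x = VL (VA a)) \<or> x = eps_l \<or> x = down_l"
  by (auto simp: PropIn_def eps_l_def down_l_def)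

lemma enc_PropIn_cases:
  "x \<in> elems (enc n PropIn) \<Longrightarrow>
    (\<exists>a. x = VL (VL (VA a))) \<or> (\<exists>k<n. x = VL (VR (cst k))) \<or> x = eps_l \<or> x = down_l"
  by (auto simp: PropIn_def eps_l_def down_l_def elems_Consts)

lemma enc_atom_prop_enc_val:
  assumes w: "w \<in> lists (elems PropIn)"
  shows "enc_atom_prop (map (enc_val as PropIn) w) = map (enc_val as PropOut) (atom_prop w)"
proof (rule nth_equalityI)
  fix i assume "i < length (enc_atom_prop (map (enc_val as PropIn) w))"
  then have i: "i < length w" by simp
  have "w ! k \<in> elems PropIn" if "k < length w" for k
    using w that by (simp add: in_lists_conv_set)
  then have eps: "enc_val as PropIn (w ! k) = eps_l \<longleftrightarrow> w ! k = eps_l"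
    and down: "enc_val as PropIn (w ! k) = down_l \<longleftrightarrow> w ! k = down_l"
    and VL: "is_VL (enc_val as PropIn (w ! k)) \<longleftrightarrow> is_atom_l (w ! k)"
    and atom: "is_atom_l (w ! k) \<Longrightarrow> enc_val as PropIn (w ! k) = enc_val as PropOut (w ! k)"
    if "k < length w" for k
    using that PropIn_cases
    by (fastforce simp: PropIn_def PropOut_def eps_l_def down_l_def is_VL_def is_atom_l_def)+
  have last: "last_non_eps (map (enc_val as PropIn) w) i = last_non_eps w i"
    using i eps by (intro last_non_eps_map) auto
  show "enc_atom_prop (map (enc_val as PropIn) w) ! i = map (enc_val as PropOut) (atom_prop w) ! i"
  proof (cases "last_non_eps w i")
    case None
    then show ?thesis
      using i last down by (auto simp: enc_atom_prop_nth atom_prop_nth bot_l_def PropOut_def)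
  next
    case (Some j)
    then have "j < length w" using last_non_eps_Some[OF Some] i by simp
    then show ?thesis
      using i last down VL atom Some
      by (auto simp: enc_atom_prop_nth atom_prop_nth bot_l_def PropOut_def)
  qed
qed simp

text \<open>In the atom track a constant becomes \<open>\<down>\<close>, so that it stops the propagation of earlier atoms.\<close>

fun atom_track :: "val \<Rightarrow> val" where
  "atom_track (VL (VL x)) = VL x"
| "atom_track (VL (VR c)) = down_l"
| "atom_track x = x"

text \<open>The constant track is read by a Mealy machine whose state \<open>Suc k\<close> records that the last
  letter other than \<open>\<epsilon>\<close> was \<open>cst k\<close> (state \<open>0\<close>: there is none). Its input letters are a constant,
  \<open>\<epsilon>\<close>, \<open>\<down>\<close> and a marker for atoms; on \<open>\<down>\<close> it outputs the recorded constant, or \<open>VR (VL VU)\<close>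
  (defer to the atom track) if there is none, and every other output is \<open>\<bottom> = VR (VR VU)\<close>.\<close>

definition ConstTrackIn :: "nat \<Rightarrow> pof" where
  "ConstTrackIn n = PSum (Consts n) (PSum PUnit (PSum PUnit PUnit))"

definition ConstTrackOut :: "nat \<Rightarrow> pof" where
  "ConstTrackOut n = PSum (Consts n) (PSum PUnit PUnit)"

fun const_track :: "val \<Rightarrow> val" where
  "const_track (VL (VL x)) = VR (VR (VR VU))"
| "const_track (VL (VR c)) = VL c"
| "const_track (VR (VL VU)) = VR (VL VU)"
| "const_track x = VR (VR (VL VU))"

definition const_delta :: "nat \<Rightarrow> val \<Rightarrow> nat \<times> val" where
  "const_delta q x =
    (case x of
      VL c \<Rightarrow> (Suc (cst_index c), VR (VR VU))
    | _ \<Rightarrow> if x = VR (VL VU) then (q, VR (VR VU))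
          else if x = VR (VR (VL VU)) then (0, if q = 0 then VR (VL VU) else VL (cst (q - 1)))
          else (0, VR (VR VU)))"

fun merge_tracks :: "val \<Rightarrow> val" where
  "merge_tracks (VP y\<^sub>1 y\<^sub>2) =
    (case y\<^sub>2 of
      VL c \<Rightarrow> VL (VR c)
    | _ \<Rightarrow> if y\<^sub>2 = VR (VL VU) then (case y\<^sub>1 of VL a \<Rightarrow> VL (VL a) | _ \<Rightarrow> VR VU) else VR VU)"
| "merge_tracks _ = VU"

definition split_tracks :: "val \<Rightarrow> val" where
  "split_tracks x = VP (atom_track x) (const_track x)"

definition const_state :: "val list \<Rightarrow> nat \<Rightarrow> nat" where
  "const_state w i =
    (case last_non_eps w i of
      None \<Rightarrow> 0
    | Some j \<Rightarrow> (case w ! j of VL (VR c) \<Rightarrow> Suc (cst_index c) | _ \<Rightarrow> 0))"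

lemma const_track_state:
  assumes w: "w \<in> lists (elems (enc n PropIn))" and i: "i \<le> length w"
  shows "foldl (\<lambda>q x. fst (const_delta q x)) 0 (take i (map const_track w)) = const_state w i"
  using i
proof (induction i)
  case 0
  then show ?case by (simp add: const_state_def)
next
  case (Suc i)
  then have i: "i < length w" by simp
  then have "w ! i \<in> elems (enc n PropIn)" using w by (simp add: in_lists_conv_set)
  then have "fst (const_delta (const_state w i) (const_track (w ! i))) = const_state w (Suc i)"
    by (auto dest!: enc_PropIn_cases simp: const_state_def const_delta_def eps_l_def down_l_def)
  with Suc i show ?case by (simp add: take_Suc_conv_app_nth)
qed

lemma enc_atom_prop_tracks:
  assumes w: "w \<in> lists (elems (enc n PropIn))"
  shows "enc_atom_prop w =
    map merge_tracks (map2 VP (atom_prop (map atom_track w)) (mealy_run const_delta 0 (map const_track w)))"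
proof (rule nth_equalityI)
  fix i assume "i < length (enc_atom_prop w)"
  then have i: "i < length w" by simp
  have mem: "w ! k \<in> elems (enc n PropIn)" if "k < length w" for k
    using w that by (simp add: in_lists_conv_set)
  have "last_non_eps (map atom_track w) i = last_non_eps w i"
  proof (rule last_non_eps_map)
    fix k assume "k < i"
    then show "atom_track (w ! k) = eps_l \<longleftrightarrow> w ! k = eps_l"
      using enc_PropIn_cases[OF mem, of k] i by (auto simp: eps_l_def down_l_def)
  qed (use i in simp)
  moreover have "mealy_run const_delta 0 (map const_track w) ! i =
      snd (const_delta (const_state w i) (const_track (w ! i)))"
    using i const_track_state[OF w, of i] by (simp add: mealy_run_nth)
  ultimately have rhs: "map merge_tracks (map2 VP (atom_prop (map atom_track w))
        (mealy_run const_delta 0 (map const_track w))) ! i =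
      merge_tracks (VP (if atom_track (w ! i) = down_l \<and>
            (\<exists>j. last_non_eps w i = Some j \<and> is_atom_l (atom_track (w ! j)))
          then atom_track (w ! the (last_non_eps w i)) else bot_l)
        (snd (const_delta (const_state w i) (const_track (w ! i)))))"
    using i last_non_eps_Some[of w i] by (auto simp: atom_prop_nth)
  show "enc_atom_prop w ! i = map merge_tracks (map2 VP (atom_prop (map atom_track w))
      (mealy_run const_delta 0 (map const_track w))) ! i"
  proof (cases "last_non_eps w i")
    case None
    then show ?thesis
      unfolding rhs using i enc_PropIn_cases[OF mem[OF i]]
      by (auto simp: enc_atom_prop_nth const_state_def const_delta_def eps_l_def down_l_def bot_l_def)
  next
    case (Some j)
    have j: "j < length w" "w ! j \<noteq> eps_l" using last_non_eps_Some[OF Some] i by auto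
    show ?thesis
      unfolding rhs using i j Some enc_PropIn_cases[OF mem[OF i]] enc_PropIn_cases[OF mem[OF j(1)]]
      by (auto simp: enc_atom_prop_nth const_state_def const_delta_def eps_l_def down_l_def bot_l_def
          is_VL_def is_atom_l_def)
  qed
qed simp

lemma split_tracks_elems:
  "x \<in> elems (enc n PropIn) \<Longrightarrow> split_tracks x \<in> elems (PProd PropIn (ConstTrackIn n))"
  by (drule enc_PropIn_cases)
    (auto simp: split_tracks_def ConstTrackIn_def PropIn_def elems_Consts eps_l_def down_l_def)

lemma split_tracks_act:
  "x \<in> elems (enc n PropIn) \<Longrightarrow> split_tracks (act \<pi> x) = act \<pi> (split_tracks x)"
  by (drule enc_PropIn_cases) (auto simp: split_tracks_def eps_l_def down_l_def act_no_atoms)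

lemma comp_primes_enc_atom_prop: "comp_primes [] (enc n PropIn) (enc n PropOut) enc_atom_prop"
proof -
  have split: "comp_primes [] (enc n PropIn) (PProd PropIn (ConstTrackIn n)) (map split_tracks)"
    by (rule homomorphism[where h = split_tracks])
      (use split_tracks_elems split_tracks_act in \<open>auto simp: supported_on_def simp del: elems.simps\<close>)
  have const: "comp_primes [] (ConstTrackIn n) (ConstTrackOut n) (mealy_run const_delta 0)"
    by (rule mealy_machine[of _ _ "{0..n}"])
      (auto simp: ConstTrackIn_def ConstTrackOut_def elems_Consts const_delta_def split: if_splits)
  have tracks: "comp_primes [] (PProd PropIn (ConstTrackIn n)) (PProd PropOut (ConstTrackOut n))
      (\<lambda>v. map2 VP (atom_prop (map pfst v)) (mealy_run const_delta 0 (map psnd v)))"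
    by (rule parallel[OF propagation[of atom_prop] const]) simp_all
  have merge: "comp_primes [] (PProd PropOut (ConstTrackOut n)) (enc n PropOut) (map merge_tracks)"
    by (rule homomorphism[where h = merge_tracks])
      (auto simp: supported_on_def ConstTrackOut_def PropOut_def elems_Consts act_no_atoms)
  have "comp_primes [] (enc n PropIn) (PProd PropOut (ConstTrackOut n))
      (\<lambda>w. map2 VP (atom_prop (map atom_track w)) (mealy_run const_delta 0 (map const_track w)))"
    by (rule sequential[OF split tracks]) (simp add: split_tracks_def comp_def)
  then show ?thesis
    by (rule sequential[OF _ merge]) (use enc_atom_prop_tracks in blast)
qed

definition simulates :: "nat list \<Rightarrow> pof \<Rightarrow> pof \<Rightarrow> (val list \<Rightarrow> val list) \<Rightarrow> (val list \<Rightarrow> val list) \<Rightarrow> bool" where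
  "simulates as S G F f \<longleftrightarrow> comp_primes [] (enc (length as) S) (enc (length as) G) F \<and>
     (\<forall>w\<in>lists (elems S). F (map (enc_val as S) w) = map (enc_val as G) (f w))"

lemma simulates_homomorphism:
  assumes "\<forall>x\<in>elems S. h x \<in> elems G" "supported_on as (elems S) h" "\<forall>w\<in>lists (elems S). f w = map h w"
  shows "simulates as S G (map (enc_hom as S G h)) f"
  unfolding simulates_def
proof
  show "comp_primes [] (enc (length as) S) (enc (length as) G) (map (enc_hom as S G h))"
    by (rule homomorphism[where h = "enc_hom as S G h"])
      (use assms(1,2) enc_hom_elems enc_hom_equivariant in blast)+
  show "\<forall>w\<in>lists (elems S). map (enc_hom as S G h) (map (enc_val as S) w) = map (enc_val as G) (f w)"
    using assms enc_hom_enc_val by auto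
qed

lemma map_enc_val_finite_elems:
  "finite (elems A) \<Longrightarrow> v \<in> lists (elems A) \<Longrightarrow> map (enc_val as A) v = v"
  by (induction v) (auto simp: enc_val_no_atoms atoms_finite_elems)

lemma simulates_mealy_machine:
  assumes S: "finite (elems S)" and G: "finite (elems G)" and "finite Q" "q\<^sub>0 \<in> Q"
    and \<delta>: "\<forall>q\<in>Q. \<forall>x\<in>elems S. fst (\<delta> q x) \<in> Q \<and> snd (\<delta> q x) \<in> elems G"
    and f: "\<forall>w\<in>lists (elems S). f w = mealy_run \<delta> q\<^sub>0 w"
  shows "simulates as S G f f"
  unfolding simulates_def
proof
  have "finite (elems (enc (length as) S))" "finite (elems (enc (length as) G))"
    "\<forall>q\<in>Q. \<forall>x\<in>elems (enc (length as) S).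
       fst (\<delta> q x) \<in> Q \<and> snd (\<delta> q x) \<in> elems (enc (length as) G)"
    "\<forall>w\<in>lists (elems (enc (length as) S)). f w = mealy_run \<delta> q\<^sub>0 w"
    using S G \<delta> f by (simp_all only: elems_enc_finite)
  then show "comp_primes [] (enc (length as) S) (enc (length as) G) f"
    using assms(3,4) by (intro mealy_machine[of _ _ Q q\<^sub>0 \<delta>])
  show "\<forall>w\<in>lists (elems S). f (map (enc_val as S) w) = map (enc_val as G) (f w)"
  proof
    fix w assume w: "w \<in> lists (elems S)"
    then have "f w \<in> lists (elems G)" using mealy_run_lists[OF \<delta> assms(4)] f by simp
    then show "f (map (enc_val as S) w) = map (enc_val as G) (f w)"
      using w S G by (simp add: map_enc_val_finite_elems)
  qed
qed

lemma simulates_propagation: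
  "\<forall>w\<in>lists (elems PropIn). f w = atom_prop w \<Longrightarrow> simulates as PropIn PropOut enc_atom_prop f"
  by (simp add: simulates_def comp_primes_enc_atom_prop enc_atom_prop_enc_val)

lemma simulates_sequential:
  assumes f: "comp_primes as S G f" and F: "simulates as S G F f" and K: "simulates as G D K g"
    and h: "\<forall>w\<in>lists (elems S). h w = g (f w)"
  shows "simulates as S D (\<lambda>w. K (F w)) h"
  unfolding simulates_def
proof
  show "comp_primes [] (enc (length as) S) (enc (length as) D) (\<lambda>w. K (F w))"
    using F K unfolding simulates_def by (blast intro: sequential[where h = "\<lambda>w. K (F w)"])
  show "\<forall>w\<in>lists (elems S). K (F (map (enc_val as S) w)) = map (enc_val as D) (h w)"
  proof
    fix w assume w: "w \<in> lists (elems S)"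
    then have "f w \<in> lists (elems G)" using comp_primes_lists[OF f] by blast
    then show "K (F (map (enc_val as S) w)) = map (enc_val as D) (h w)"
      using F K h w by (simp add: simulates_def)
  qed
qed

lemma map2_VP_enc_val:
  "map2 VP (map (enc_val as A) u) (map (enc_val as B) v) = map (enc_val as (PProd A B)) (map2 VP u v)"
  by (simp add: zip_map1 zip_map2 split_def)

lemma simulates_parallel:
  assumes F\<^sub>1: "simulates as S\<^sub>1 G\<^sub>1 F\<^sub>1 f\<^sub>1" and F\<^sub>2: "simulates as S\<^sub>2 G\<^sub>2 F\<^sub>2 f\<^sub>2"
    and h: "\<forall>w\<in>lists (elems (PProd S\<^sub>1 S\<^sub>2)). h w = map2 VP (f\<^sub>1 (map pfst w)) (f\<^sub>2 (map psnd w))"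
  shows "simulates as (PProd S\<^sub>1 S\<^sub>2) (PProd G\<^sub>1 G\<^sub>2) (\<lambda>w. map2 VP (F\<^sub>1 (map pfst w)) (F\<^sub>2 (map psnd w))) h"
  unfolding simulates_def
proof
  have cp: "comp_primes [] (enc (length as) S\<^sub>1) (enc (length as) G\<^sub>1) F\<^sub>1"
    "comp_primes [] (enc (length as) S\<^sub>2) (enc (length as) G\<^sub>2) F\<^sub>2"
    using F\<^sub>1 F\<^sub>2 by (simp_all add: simulates_def)
  show "comp_primes [] (enc (length as) (PProd S\<^sub>1 S\<^sub>2)) (enc (length as) (PProd G\<^sub>1 G\<^sub>2))
      (\<lambda>w. map2 VP (F\<^sub>1 (map pfst w)) (F\<^sub>2 (map psnd w)))"
    using parallel[OF cp, where h = "\<lambda>w. map2 VP (F\<^sub>1 (map pfst w)) (F\<^sub>2 (map psnd w))"] by simp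
  show "\<forall>w\<in>lists (elems (PProd S\<^sub>1 S\<^sub>2)). map2 VP (F\<^sub>1 (map pfst (map (enc_val as (PProd S\<^sub>1 S\<^sub>2)) w)))
      (F\<^sub>2 (map psnd (map (enc_val as (PProd S\<^sub>1 S\<^sub>2)) w))) = map (enc_val as (PProd G\<^sub>1 G\<^sub>2)) (h w)"
  proof
    fix w assume w: "w \<in> lists (elems (PProd S\<^sub>1 S\<^sub>2))"
    then have w': "map pfst w \<in> lists (elems S\<^sub>1)" "map psnd w \<in> lists (elems S\<^sub>2)"
      and m: "map pfst (map (enc_val as (PProd S\<^sub>1 S\<^sub>2)) w) = map (enc_val as S\<^sub>1) (map pfst w)"
        "map psnd (map (enc_val as (PProd S\<^sub>1 S\<^sub>2)) w) = map (enc_val as S\<^sub>2) (map psnd w)"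
      by force+
    have "map2 VP (F\<^sub>1 (map pfst (map (enc_val as (PProd S\<^sub>1 S\<^sub>2)) w)))
        (F\<^sub>2 (map psnd (map (enc_val as (PProd S\<^sub>1 S\<^sub>2)) w)))
      = map2 VP (map (enc_val as G\<^sub>1) (f\<^sub>1 (map pfst w))) (map (enc_val as G\<^sub>2) (f\<^sub>2 (map psnd w)))"
      using F\<^sub>1 F\<^sub>2 w' unfolding simulates_def m by (metis (no_types, lifting))
    also have "\<dots> = map (enc_val as (PProd G\<^sub>1 G\<^sub>2)) (h w)"
      using h w by (simp only: map2_VP_enc_val)
    finally show "map2 VP (F\<^sub>1 (map pfst (map (enc_val as (PProd S\<^sub>1 S\<^sub>2)) w)))
        (F\<^sub>2 (map psnd (map (enc_val as (PProd S\<^sub>1 S\<^sub>2)) w))) = map (enc_val as (PProd G\<^sub>1 G\<^sub>2)) (h w)" .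
  qed
qed

theorem comp_primes_simulation: "comp_primes as S G f \<Longrightarrow> \<exists>F. simulates as S G F f"
proof (induction rule: comp_primes.induct)
  case (homomorphism S h G f)
  then show ?case using simulates_homomorphism by blast
next
  case (mealy_machine S G Q q\<^sub>0 \<delta> f)
  then show ?case using simulates_mealy_machine by blast
next
  case (propagation f)
  then show ?case using simulates_propagation by blast
next
  case (sequential S G f D g h)
  then show ?case using simulates_sequential by blast
next
  case (parallel S\<^sub>1 G\<^sub>1 f\<^sub>1 S\<^sub>2 G\<^sub>2 f\<^sub>2 h)
  then show ?case using simulates_parallel by blast
qed

section \<open>Removing the constants for equivariant functions\<close>

lemma simulation_emb_val:
  assumes eq: "equivariant_str (elems S) f" and fG: "\<forall>w\<in>lists (elems S). f w \<in> lists (elems G)"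
    and F: "simulates as S G F f" and w: "w \<in> lists (elems S)"
  shows "F (map (emb_val S) w) = map (emb_val G) (f w)"
proof -
  obtain \<pi> where \<pi>: "bij \<pi>" "\<pi> ` (\<Union>x\<in>set w. atoms x) \<inter> set as = {}"
    using bij_avoiding[of "\<Union>x\<in>set w. atoms x" "set as"] by auto
  have fresh: "atoms (act \<pi> x) \<inter> set as = {}" if "atoms x \<subseteq> (\<Union>y\<in>set w. atoms y)" for x
    unfolding atoms_act using \<pi>(2) that by blast
  have "act \<pi> (emb_val S x) = enc_val as S (act \<pi> x)" if x: "x \<in> set w" for x
  proof -
    have "atoms x \<subseteq> (\<Union>y\<in>set w. atoms y)" "x \<in> elems S"
      using w x by auto
    then show ?thesis using fresh by (simp add: emb_val_act act_elems enc_val_fresh)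
  qed
  then have enc_input: "map (act \<pi>) (map (emb_val S) w) = map (enc_val as S) (map (act \<pi>) w)"
    by simp
  have "act \<pi> (emb_val G x) = enc_val as G (act \<pi> x)" if x: "x \<in> set (f w)" for x
  proof -
    have "atoms x \<subseteq> (\<Union>y\<in>set w. atoms y)"
      using supported_str_atoms[OF eq[unfolded equivariant_str_def] w x] by simp
    moreover have "x \<in> elems G"
      using fG w x by blast
    ultimately show ?thesis using fresh by (simp add: emb_val_act act_elems enc_val_fresh)
  qed
  then have enc_output: "map (act \<pi>) (map (emb_val G) (f w)) = map (enc_val as G) (map (act \<pi>) (f w))"
    by simp
  have emb_w: "map (emb_val S) w \<in> lists (elems (enc (length as) S))"
    using w emb_val_elems by auto
  have "comp_primes [] (enc (length as) S) (enc (length as) G) F"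
    using F by (simp add: simulates_def)
  then have "map (act \<pi>) (F (map (emb_val S) w)) = F (map (act \<pi>) (map (emb_val S) w))"
    using comp_primes_act[OF _ \<pi>(1) _ emb_w] by simp
  also have "\<dots> = map (enc_val as G) (f (map (act \<pi>) w))"
    unfolding enc_input using F lists_act[OF w] unfolding simulates_def by blast
  also have "\<dots> = map (act \<pi>) (map (emb_val G) (f w))"
    using eq w \<pi>(1) enc_output by (simp add: equivariant_str_def supported_str_def)
  finally show ?thesis
    by (simp only: inj_map_eq_map[OF inj_act[OF \<pi>(1)]])
qed

text \<open>Off the image of the embedding, the default \<open>hd (f [z])\<close> computed from the input letter \<open>z\<close>
  kept alongside makes the decoding equivariant.\<close>

definition dec_default :: "pof \<Rightarrow> (val list \<Rightarrow> val list) \<Rightarrow> val \<Rightarrow> val" where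
  "dec_default G f v =
    (if pfst v \<in> emb_val G ` elems G then dec_val [] G (pfst v) else hd (f [psnd v]))"

lemma emb_val_image_act:
  assumes "bij \<pi>"
  shows "act \<pi> y \<in> emb_val G ` elems G \<longleftrightarrow> y \<in> emb_val G ` elems G"
proof
  assume "act \<pi> y \<in> emb_val G ` elems G"
  then obtain z where z: "z \<in> elems G" "act \<pi> y = emb_val G z" by auto
  have "y = act (inv \<pi>) (act \<pi> y)" by (simp add: act_inv_act assms)
  also have "\<dots> = emb_val G (act (inv \<pi>) z)" by (simp add: z emb_val_act)
  finally show "y \<in> emb_val G ` elems G" using act_elems z(1) by blast
next
  assume "y \<in> emb_val G ` elems G"
  then obtain z where z: "z \<in> elems G" "y = emb_val G z" by auto
  then have "act \<pi> y = emb_val G (act \<pi> z)" by (simp add: emb_val_act)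
  then show "act \<pi> y \<in> emb_val G ` elems G" using act_elems z(1) by blast
qed

lemma dec_default_elems:
  assumes "\<forall>w\<in>lists (elems S). f w \<in> lists (elems G) \<and> length (f w) = length w"
    and "v \<in> elems (PProd (enc n G) S)"
  shows "dec_default G f v \<in> elems G"
proof -
  obtain z where z: "z \<in> elems S" "psnd v = z" using assms(2) by auto
  then have "f [z] \<in> lists (elems G)" "length (f [z]) = 1" using assms(1) by auto
  then have "hd (f [z]) \<in> elems G" by (cases "f [z]") auto
  with z show ?thesis by (auto simp: dec_default_def dec_emb_val)
qed

lemma dec_default_equivariant:
  assumes eq: "equivariant_str (elems S) f"
    and len: "\<forall>w\<in>lists (elems S). length (f w) = length w"
  shows "supported_on [] (elems (PProd (enc n G) S)) (dec_default G f)"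
  unfolding supported_on_def
proof (intro allI impI ballI)
  fix \<pi> :: "nat \<Rightarrow> nat" and v assume "bij \<pi> \<and> (\<forall>a\<in>set []. \<pi> a = a)" and v: "v \<in> elems (PProd (enc n G) S)"
  then have \<pi>: "bij \<pi>" by simp
  obtain y z where yz: "v = VP y z" "z \<in> elems S" using v by auto
  show "dec_default G f (act \<pi> v) = act \<pi> (dec_default G f v)"
  proof (cases "y \<in> emb_val G ` elems G")
    case True
    then show ?thesis
      using yz emb_val_image_act[OF \<pi>] dec_val_act[of _ "[]" G \<pi>]
      by (auto simp: dec_default_def emb_val_elems)
  next
    case False
    have "\<forall>w\<in>lists (elems S). f (map (act \<pi>) w) = map (act \<pi>) (f w)"
      using eq \<pi> by (simp add: equivariant_str_def supported_str_def)
    then have "f [act \<pi> z] = map (act \<pi>) (f [z])"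
      using yz(2) by (metis list.simps(8,9) lists.Cons lists.Nil)
    moreover have "length (f [z]) = 1" using len yz(2) by simp
    then have "f [z] \<noteq> []" by auto
    ultimately show ?thesis
      using False yz emb_val_image_act[OF \<pi>] by (simp add: dec_default_def hd_map)
  qed
qed

lemma comp_primes_of_emb_val:
  assumes eq: "equivariant_str (elems S) f" and fG: "\<forall>w\<in>lists (elems S). f w \<in> lists (elems G)"
    and F: "comp_primes [] S (enc n G) F" "\<forall>w\<in>lists (elems S). F w = map (emb_val G) (f w)"
  shows "comp_primes [] S G f"
proof -
  have len: "\<forall>w\<in>lists (elems S). length (f w) = length w"
    using comp_primes_lists[OF F(1)] F(2) by (metis length_map)
  have dup: "comp_primes [] S (PProd S S) (map (\<lambda>x. VP x x))"
    by (rule homomorphism[where h = "\<lambda>x. VP x x"]) (auto simp: supported_on_def)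
  have ident: "comp_primes [] S S (\<lambda>w. w)"
    by (rule homomorphism[where h = "\<lambda>x. x"]) (auto simp: supported_on_def)
  have "comp_primes [] (PProd S S) (PProd (enc n G) S) (\<lambda>v. map2 VP (F (map pfst v)) (map psnd v))"
    by (rule parallel[OF F(1) ident]) simp
  then have pair: "comp_primes [] S (PProd (enc n G) S) (\<lambda>w. map2 VP (map (emb_val G) (f w)) w)"
    by (rule sequential[OF dup]) (simp add: comp_def F(2) map2_map_map[symmetric])
  have dec: "comp_primes [] (PProd (enc n G) S) G (map (dec_default G f))"
    by (rule homomorphism[where h = "dec_default G f"])
      (use dec_default_elems[of S f G] dec_default_equivariant[OF eq len] fG len in auto)
  have "f w = map (dec_default G f) (map2 VP (map (emb_val G) (f w)) w)" if w: "w \<in> lists (elems S)" for w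
  proof (rule nth_equalityI)
    fix i assume i: "i < length (f w)"
    then have "f w ! i \<in> elems G" using fG w by (auto simp: in_lists_conv_set)
    then show "f w ! i = map (dec_default G f) (map2 VP (map (emb_val G) (f w)) w) ! i"
      using i len w by (simp add: dec_default_def dec_emb_val)
  qed (use len w in simp)
  then show ?thesis
    by (intro sequential[OF pair dec]) auto
qed

theorem mainTheorem10:
  fixes abar :: "nat list" and S G :: pof and f :: "val list \<Rightarrow> val list"
  assumes "\<forall>w\<in>lists (elems S). f w \<in> lists (elems G)"
    and "equivariant_str (elems S) f"
    and "comp_primes abar S G f"
  shows "comp_primes [] S G f"
proof -
  obtain F where F: "simulates abar S G F f"
    using comp_primes_simulation[OF assms(3)] by blast
  have emb: "comp_primes [] S (enc (length abar) S) (map (emb_val S))"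
    by (rule homomorphism[where h = "emb_val S"]) (auto simp: supported_on_def emb_val_elems emb_val_act)
  have "comp_primes [] S (enc (length abar) G) (\<lambda>w. F (map (emb_val S) w))"
    using F by (intro sequential[OF emb]) (auto simp: simulates_def)
  moreover have "\<forall>w\<in>lists (elems S). F (map (emb_val S) w) = map (emb_val G) (f w)"
    using simulation_emb_val[OF assms(2,1) F] by blast
  ultimately show ?thesis
    using comp_primes_of_emb_val[OF assms(2,1)] by blast
qed

end
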